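(* Let $0<q<p<\infty$. Then there is no $q$-reverse Carleson measure for $H^p(\mathbb{D})$; that is, there is no finite positive Borel measure $\mu$ on $\overline{\mathbb{D}}$ and constant $C>0$ such that $\|f\|_{H^p}\le C\|f\|_{L^q(\overline{\mathbb{D}},\mu)}$ for all $f\in H^p(\mathbb{D})\cap C(\overline{\mathbb{D}})$.
   Context: $H^p=H^p(\mathbb{D})$ ($0<p<\infty$) is the space of holomorphic $f$ on the unit disc $\mathbb{D}$ with $\|f\|_{H^p}^p=\sup_{0<r<1}\int_0^1|f(re^{2\pi it})|^p\,dt<\infty$. *)

theory Defs
  imports "HOL-Analysis.Analysis"
begin

definition Hp_integral_mean :: "real \<Rightarrow> (complex \<Rightarrow> complex) \<Rightarrow> real \<Rightarrow> real" where
  "Hp_integral_mean p f r =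
     (LINT t:{0..1}|lborel. norm (f (complex_of_real r * exp (2 * pi * \<i> * complex_of_real t))) powr p)"

definition Hp_norm :: "real \<Rightarrow> (complex \<Rightarrow> complex) \<Rightarrow> real" where
  "Hp_norm p f = (SUP r\<in>{0<..<1}. Hp_integral_mean p f r) powr (1 / p)"

definition Lq_norm :: "real \<Rightarrow> complex measure \<Rightarrow> (complex \<Rightarrow> complex) \<Rightarrow> real" where
  "Lq_norm q \<mu> f = (LINT z|\<mu>. norm (f z) powr q) powr (1 / q)"

end

theory Submission
  imports Defs "HOL-Real_Asymp.Real_Asymp"
begin

text \<open>
  Test the inequality on the peaking functions \<open>g(z) = exp (M (cnj a z - 1))\<close> with \<open>|a| = 1\<close>,
  for which \<open>|g(z)| = exp (- M (1 - Re (cnj a z)))\<close>. Near the boundary point \<open>a\<close>, \<open>|g|\<close> stays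
  above \<open>1/e\<close> on an arc of length about \<open>(pM)^(-1/2)\<close>, so \<open>\<parallel>g\<parallel>\<^sub>H\<^sub>p^p \<ge> c (pM)^(-1/2)\<close>.
  On the closed disc \<open>|g| \<le> 1\<close>, and \<open>|g| \<le> exp (- M \<delta>\<^sup>2 / 2)\<close> outside \<open>ball a \<delta>\<close>, so
  \<open>\<integral> |g|^q d\<mu> \<le> \<mu> (ball a \<delta>) + \<mu> (D) exp (- q M \<delta>\<^sup>2 / 2)\<close>. Among \<open>N\<close> points \<open>a\<close> with
  disjoint balls of radius \<open>\<delta> = 1/(2N)\<close>, one ball has measure at most \<open>\<mu> (D) / N\<close>. Taking
  \<open>M = N^(1+s)\<close> with \<open>s = p/q > 1\<close>, the reverse Carleson inequality would give
  \<open>N^(-(1+s)/2) \<le> C' N^(-s)\<close>, which fails for large \<open>N\<close>.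
\<close>

definition peak_fun :: "real \<Rightarrow> complex \<Rightarrow> complex \<Rightarrow> complex" where
  "peak_fun M a z = exp (complex_of_real M * (cnj a * z - 1))"

lemma norm_peak_fun_powr:
  "norm (peak_fun M a z) powr p = exp (p * M * (Re (cnj a * z) - 1))"
  by (simp add: peak_fun_def exp_powr_real mult_ac)

lemma holomorphic_peak_fun: "peak_fun M a holomorphic_on S"
  unfolding peak_fun_def by (intro holomorphic_intros)

lemma continuous_on_peak_fun: "continuous_on S (peak_fun M a)"
  unfolding peak_fun_def by (intro continuous_intros)

subsection \<open>The peaking functions have large \<open>H\<^sup>p\<close> norm\<close>

lemma one_minus_sq_div_2_le_cos: "1 - x\<^sup>2 / 2 \<le> cos (x::real)"
proof -
  have "cos x = 1 - 2 * (sin (x/2))\<^sup>2"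
    using cos_double_sin[of "x/2"] by simp
  moreover have "(sin (x/2))\<^sup>2 \<le> (x/2)\<^sup>2"
    using abs_sin_x_le_abs_x[of "x/2"] by (metis abs_ge_zero power2_abs power_mono)
  ultimately show ?thesis
    by (simp add: power_divide)
qed

lemma Re_cnj_cis_mult_circle:
  "Re (cnj (cis \<theta>) * (complex_of_real r * exp (2 * pi * \<i> * complex_of_real t)))
     = r * cos (2 * pi * t - \<theta>)"
proof -
  have "exp (2 * pi * \<i> * complex_of_real t) = cis (2 * pi * t)"
    by (simp add: cis_conv_exp mult_ac)
  then show ?thesis
    by (simp add: cos_diff algebra_simps)
qed

lemma Hp_integral_mean_peak_fun:
  "Hp_integral_mean p (peak_fun M (cis \<theta>)) r
     = integral {0..1} (\<lambda>t. exp (p * M * (r * cos (2 * pi * t - \<theta>) - 1)))"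
proof -
  have "Hp_integral_mean p (peak_fun M (cis \<theta>)) r
          = (LINT t:{0..1}|lborel. exp (p * M * (r * cos (2 * pi * t - \<theta>) - 1)))"
    unfolding Hp_integral_mean_def by (simp only: norm_peak_fun_powr Re_cnj_cis_mult_circle)
  also have "\<dots> = integral {0..1} (\<lambda>t. exp (p * M * (r * cos (2 * pi * t - \<theta>) - 1)))"
    by (intro set_borel_integral_eq_integral(2) borel_integrable_atLeastAtMost' continuous_intros)
  finally show ?thesis .
qed

lemma Hp_integral_mean_peak_fun_le_1:
  assumes "0 \<le> p" "0 \<le> M" "\<bar>r\<bar> \<le> 1"
  shows "Hp_integral_mean p (peak_fun M (cis \<theta>)) r \<le> 1"
proof -
  have "exp (p * M * (r * cos (2 * pi * t - \<theta>) - 1)) \<le> 1" for t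
  proof -
    have "r * cos (2 * pi * t - \<theta>) \<le> 1"
      using assms(3) abs_cos_le_one[of "2 * pi * t - \<theta>"]
      by (metis abs_le_D1 abs_mult mult_le_one abs_ge_zero)
    then show ?thesis
      using assms(1,2) by (simp add: mult_nonneg_nonpos)
  qed
  then have "integral {0..1} (\<lambda>t. exp (p * M * (r * cos (2 * pi * t - \<theta>) - 1)))
               \<le> integral {0..1} (\<lambda>_::real. 1::real)"
    by (intro integral_le integrable_continuous_interval continuous_intros) auto
  then show ?thesis
    by (simp add: Hp_integral_mean_peak_fun)
qed

text \<open>At radius \<open>1 - 1/(2pM)\<close> the integrand is at least \<open>e\<^sup>-\<^sup>1\<close> as long as
  \<open>0 \<le> 2\<pi>t - \<theta> \<le> (pM)\<^sup>-\<^sup>1\<^sup>/\<^sup>2\<close>; the restriction on \<open>\<theta>\<close> keeps this arc inside \<open>[0,1]\<close>.\<close>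

lemma Hp_integral_mean_peak_fun_ge:
  assumes p: "p > 0" and M: "M > 0" and pM: "p * M \<ge> 1" and \<theta>: "0 \<le> \<theta>" "\<theta> \<le> pi/2"
  shows "exp (-1) / (2 * pi * sqrt (p * M))
           \<le> Hp_integral_mean p (peak_fun M (cis \<theta>)) (1 - 1 / (2 * p * M))"
proof -
  define e where "e = 1 / (2 * p * M)"
  define r where "r = 1 - e"
  define F where "F t = exp (p * M * (r * cos (2 * pi * t - \<theta>) - 1))" for t
  define t0 where "t0 = \<theta> / (2 * pi)"
  define \<eta> where "\<eta> = 1 / (2 * pi * sqrt (p * M))"
  have e: "0 < e" "e \<le> 1/2"
    using p M pM unfolding e_def by (auto simp: field_simps)
  have F_integrable: "F integrable_on {a..b}" for a b
    unfolding F_def by (intro integrable_continuous_interval continuous_intros)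
  have \<eta>: "0 < \<eta>" "\<eta> \<le> 1 / (2 * pi)"
    using pM unfolding \<eta>_def by (auto simp: field_simps)
  have "1 / (2 * pi) \<le> 3 / 4"
    using pi_gt3 by (simp add: field_simps)
  then have arc_sub: "{t0..t0 + \<eta>} \<subseteq> {0..1}"
    using \<eta> \<theta> unfolding t0_def by (auto simp: field_simps)
  have F_ge: "exp (-1) \<le> F t" if t: "t \<in> {t0..t0 + \<eta>}" for t
  proof -
    define x where "x = 2 * pi * t - \<theta>"
    have "0 \<le> x" "x \<le> 1 / sqrt (p * M)"
      using t unfolding x_def t0_def \<eta>_def by (auto simp: field_simps)
    then have "x\<^sup>2 \<le> 1 / (p * M)"
      using p M by (metis power_mono power_divide real_sqrt_pow2 mult_pos_pos less_imp_le
          one_power2)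
    then have "r \<le> cos x"
      using one_minus_sq_div_2_le_cos[of x] unfolding r_def e_def by (simp add: field_simps)
    then have "r * r \<le> r * cos x"
      using e unfolding r_def by (intro mult_left_mono) auto
    moreover have "r * r - 1 \<ge> -2 * e"
      unfolding r_def by (simp add: algebra_simps)
    ultimately have "p * M * (r * cos x - 1) \<ge> p * M * (-2 * e)"
      using p M by (intro mult_left_mono) auto
    also have "p * M * (-2 * e) = -1"
      unfolding e_def using p M by (simp add: field_simps)
    finally have "p * M * (r * cos x - 1) \<ge> -1" .
    then show ?thesis
      unfolding F_def x_def by simp
  qed
  have "exp (-1) / (2 * pi * sqrt (p * M)) = integral {t0..t0 + \<eta>} (\<lambda>_. exp (-1))"
    using \<eta> unfolding \<eta>_def by simp
  also have "\<dots> \<le> integral {t0..t0 + \<eta>} F"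
    using F_integrable F_ge by (intro integral_le) auto
  also have "\<dots> \<le> integral {0..1} F"
    using arc_sub F_integrable by (intro integral_subset_le) (auto simp: F_def)
  finally show ?thesis
    by (simp only: Hp_integral_mean_peak_fun F_def[abs_def] r_def e_def)
qed

lemma Hp_norm_peak_fun_ge:
  assumes "p > 0" "M > 0" "p * M \<ge> 1" "0 \<le> \<theta>" "\<theta> \<le> pi/2"
  shows "(exp (-1) / (2 * pi * sqrt (p * M))) powr (1/p) \<le> Hp_norm p (peak_fun M (cis \<theta>))"
proof -
  let ?mean = "Hp_integral_mean p (peak_fun M (cis \<theta>))"
  have r: "1 - 1 / (2 * p * M) \<in> {0<..<1}"
    using assms by (auto simp: field_simps)
  have "bdd_above (?mean ` {0<..<1})"
    using assms by (intro bdd_aboveI2[where M=1] Hp_integral_mean_peak_fun_le_1) auto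
  then have "?mean (1 - 1 / (2 * p * M)) \<le> (SUP r\<in>{0<..<1}. ?mean r)"
    using r by (rule cSUP_upper2) simp
  then have "exp (-1) / (2 * pi * sqrt (p * M)) \<le> (SUP r\<in>{0<..<1}. ?mean r)"
    using Hp_integral_mean_peak_fun_ge[OF assms] by linarith
  then show ?thesis
    unfolding Hp_norm_def using assms by (intro powr_mono2) auto
qed

subsection \<open>The peaking functions have small \<open>L\<^sup>q(\<mu>)\<close> norm\<close>

lemma Re_cnj_mult_le_one_minus_dist:
  assumes "norm a = 1" "norm z \<le> 1"
  shows "Re (cnj a * z) \<le> 1 - (norm (z - a))\<^sup>2 / 2"
proof -
  have "(Re a)\<^sup>2 + (Im a)\<^sup>2 = 1"
    using assms(1) cmod_power2[of a] by simp
  then have "(norm (z - a))\<^sup>2 = (norm z)\<^sup>2 + 1 - 2 * Re (cnj a * z)"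
    unfolding cmod_power2 by (simp add: power2_eq_square algebra_simps)
  moreover have "(norm z)\<^sup>2 \<le> 1"
    using assms(2) by (simp add: abs_square_le_1)
  ultimately show ?thesis
    by linarith
qed

lemma norm_peak_fun_powr_le_1:
  assumes "norm a = 1" "norm z \<le> 1" "0 \<le> M" "0 \<le> q"
  shows "norm (peak_fun M a z) powr q \<le> 1"
proof -
  have "0 \<le> (norm (z - a))\<^sup>2 / 2"
    by simp
  then have "Re (cnj a * z) \<le> 1"
    using Re_cnj_mult_le_one_minus_dist[OF assms(1,2)] by linarith
  then show ?thesis
    using assms(3,4) by (simp add: norm_peak_fun_powr mult_nonneg_nonpos)
qed

lemma norm_peak_fun_powr_le_outside_ball:
  assumes "norm a = 1" "norm z \<le> 1" "0 \<le> M" "0 \<le> q" "0 \<le> \<delta>" "\<delta> \<le> norm (z - a)"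
  shows "norm (peak_fun M a z) powr q \<le> exp (- (q * M * \<delta>\<^sup>2 / 2))"
proof -
  have "\<delta>\<^sup>2 \<le> (norm (z - a))\<^sup>2"
    using assms(5,6) by (simp add: power_mono)
  then have "Re (cnj a * z) - 1 \<le> - (\<delta>\<^sup>2 / 2)"
    using Re_cnj_mult_le_one_minus_dist[OF assms(1,2)] by linarith
  then have "q * M * (Re (cnj a * z) - 1) \<le> q * M * (- (\<delta>\<^sup>2 / 2))"
    using assms(3,4) by (intro mult_left_mono) auto
  then show ?thesis
    by (simp add: norm_peak_fun_powr)
qed

lemma space_eq_cball:
  assumes "sets \<mu> = sets (restrict_space borel (cball (0::complex) 1))"
  shows "space \<mu> = cball 0 1"
  using sets_eq_imp_space_eq[OF assms] by (simp add: space_restrict_space)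

lemma integral_norm_peak_fun_powr_le:
  fixes \<mu> :: "complex measure"
  assumes fm: "finite_measure \<mu>" and sets: "sets \<mu> = sets (restrict_space borel (cball 0 1))"
    and a: "norm a = 1" and M: "M \<ge> 0" and q: "q \<ge> 0" and \<delta>: "\<delta> \<ge> 0"
  shows "(LINT z|\<mu>. norm (peak_fun M a z) powr q)
           \<le> measure \<mu> (cball 0 1 \<inter> ball a \<delta>) + measure \<mu> (space \<mu>) * exp (- (q * M * \<delta>\<^sup>2 / 2))"
proof -
  interpret finite_measure \<mu> by (rule fm)
  define h where "h z = norm (peak_fun M a z) powr q" for z
  define U where "U = cball (0::complex) 1 \<inter> ball a \<delta>"
  define E where "E = exp (- (q * M * \<delta>\<^sup>2 / 2))"
  have space: "space \<mu> = cball 0 1"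
    using sets by (rule space_eq_cball)
  have U: "U \<in> sets \<mu>"
    unfolding sets sets_restrict_space U_def by auto
  have "h \<in> borel_measurable (restrict_space borel (cball 0 1))"
    unfolding h_def peak_fun_def
    by (intro measurable_restrict_space1 borel_measurable_continuous_onI continuous_intros) auto
  then have h_meas: "h \<in> borel_measurable \<mu>"
    using measurable_cong_sets[OF sets, of borel borel] by (metis (no_types))
  have h_integrable: "integrable \<mu> h"
    using h_meas norm_peak_fun_powr_le_1[OF a _ M q]
    by (intro integrable_const_bound[where B=1] AE_I2) (auto simp: space h_def)
  have h_le: "h z \<le> indicator U z + E" if "z \<in> space \<mu>" for z
  proof (cases "z \<in> ball a \<delta>")
    case True
    then show ?thesis
      using that norm_peak_fun_powr_le_1[OF a _ M q, of z]
      by (simp add: space U_def h_def E_def add_increasing2)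
  next
    case False
    then have "h z \<le> E"
      using that norm_peak_fun_powr_le_outside_ball[OF a _ M q \<delta>, of z]
      by (simp add: space h_def E_def dist_norm norm_minus_commute)
    then show ?thesis
      by (simp add: add_increasing)
  qed
  have "(LINT z|\<mu>. h z) \<le> (LINT z|\<mu>. indicator U z + E)"
    using U h_le
    by (intro integral_mono[OF h_integrable] Bochner_Integration.integrable_add
        integrable_real_indicator) (auto simp: less_top[symmetric])
  also have "\<dots> = (LINT z|\<mu>. indicator U z) + (LINT z|\<mu>. E)"
    using U by (intro Bochner_Integration.integral_add) (auto simp: less_top[symmetric])
  also have "\<dots> = measure \<mu> U + measure \<mu> (space \<mu>) * E"
    using U by simp
  finally show ?thesis
    unfolding h_def U_def E_def .
qed

lemma Lq_norm_peak_fun_le: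
  fixes \<mu> :: "complex measure"
  assumes "finite_measure \<mu>" "sets \<mu> = sets (restrict_space borel (cball 0 1))"
    and "norm a = 1" "M \<ge> 0" "q > 0" "\<delta> \<ge> 0"
  shows "Lq_norm q \<mu> (peak_fun M a)
           \<le> (measure \<mu> (cball 0 1 \<inter> ball a \<delta>) + measure \<mu> (space \<mu>) * exp (- (q * M * \<delta>\<^sup>2 / 2)))
                powr (1/q)"
  unfolding Lq_norm_def using assms
  by (intro powr_mono2 integral_norm_peak_fun_powr_le integral_nonneg_AE) auto

subsection \<open>A cap of small measure\<close>

lemma exists_le_average:
  fixes f :: "'a \<Rightarrow> real"
  assumes "finite A" "A \<noteq> {}"
  obtains k where "k \<in> A" "real (card A) * f k \<le> sum f A"
proof -
  have card: "real (card A) > 0"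
    using assms by (simp add: card_gt_0_iff)
  have "\<exists>k\<in>A. real (card A) * f k \<le> sum f A"
  proof (rule ccontr)
    assume "\<not> ?thesis"
    then have "(\<Sum>k\<in>A. sum f A / real (card A)) < sum f A"
      using assms card by (intro sum_strict_mono) (auto simp: divide_less_eq mult.commute)
    then show False
      using assms by simp
  qed
  then show thesis
    using that by blast
qed

text \<open>The points \<open>cis (arccos (k/N))\<close>, \<open>k < N\<close>, have real parts \<open>1/N\<close> apart.\<close>

lemma disjoint_family_on_balls_arccos:
  assumes "N > 0"
  shows "disjoint_family_on (\<lambda>k. ball (cis (arccos (real k / real N))) (1 / (2 * real N))) {..<N}"
  unfolding disjoint_family_on_def
proof (intro ballI impI)
  let ?a = "\<lambda>k::nat. cis (arccos (real k / real N))"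
  fix j k assume jk: "j \<in> {..<N}" "k \<in> {..<N}" "j \<noteq> k"
  have Re_a: "Re (?a i) = real i / real N" if "i < N" for i
  proof -
    have "\<bar>real i / real N\<bar> \<le> 1"
      using that by auto
    then show ?thesis
      by (simp add: cos_arccos_abs)
  qed
  have "1 / real N \<le> \<bar>Re (?a j - ?a k)\<bar>"
    using jk assms by (simp add: Re_a diff_divide_distrib[symmetric] field_simps)
  also have "\<dots> \<le> dist (?a j) (?a k)"
    using abs_Re_le_cmod[of "?a j - ?a k"] by (simp add: dist_norm)
  finally show "ball (?a j) (1 / (2 * real N)) \<inter> ball (?a k) (1 / (2 * real N)) = {}"
    by (intro disjoint_ballI) simp
qed

lemma exists_cap_of_small_measure:
  fixes \<mu> :: "complex measure"
  assumes fm: "finite_measure \<mu>" and sets: "sets \<mu> = sets (restrict_space borel (cball 0 1))"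
    and N: "N > 0"
  obtains \<theta> where "0 \<le> \<theta>" "\<theta> \<le> pi/2"
    "measure \<mu> (cball 0 1 \<inter> ball (cis \<theta>) (1 / (2 * real N))) \<le> measure \<mu> (space \<mu>) / real N"
proof -
  interpret finite_measure \<mu> by (rule fm)
  define U where "U k = cball 0 1 \<inter> ball (cis (arccos (real k / real N))) (1 / (2 * real N))"
    for k :: nat
  have U: "U k \<in> sets \<mu>" for k
    unfolding sets sets_restrict_space U_def by auto
  have "disjoint_family_on U {..<N}"
    using disjoint_family_on_balls_arccos[OF N] unfolding U_def disjoint_family_on_def by blast
  then have "(\<Sum>k<N. measure \<mu> (U k)) = measure \<mu> (\<Union>k<N. U k)"
    using U by (intro finite_measure_finite_Union[symmetric]) auto
  also have "\<dots> \<le> measure \<mu> (space \<mu>)"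
    by (rule bounded_measure)
  finally have sum_le: "(\<Sum>k<N. measure \<mu> (U k)) \<le> measure \<mu> (space \<mu>)" .
  obtain k where "k < N" "real N * measure \<mu> (U k) \<le> (\<Sum>k<N. measure \<mu> (U k))"
    using exists_le_average[of "{..<N}" "\<lambda>k. measure \<mu> (U k)"] N by auto
  with sum_le have k: "k < N" "measure \<mu> (U k) \<le> measure \<mu> (space \<mu>) / real N"
    using N by (simp_all add: le_divide_eq mult.commute)
  have kN: "0 \<le> real k / real N" "real k / real N \<le> 1"
    using k N by auto
  then have "0 \<le> arccos (real k / real N)"
    by (intro arccos_lbound) linarith+
  moreover have "arccos (real k / real N) \<le> pi/2"
    using kN by (rule arccos_le_pi2)
  ultimately show thesis
    using k
    by (intro that[of "arccos (real k / real N)"]) (auto simp: U_def)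
qed

subsection \<open>Comparing the two norms\<close>

lemma le_powr_of_root_le:
  fixes L Y C p q :: real
  assumes "0 \<le> L" "0 \<le> Y" "0 < C" "0 < p" "0 < q" "L powr (1/p) \<le> C * Y powr (1/q)"
  shows "L \<le> C powr p * Y powr (p/q)"
proof -
  have "(L powr (1/p)) powr p \<le> (C * Y powr (1/q)) powr p"
    using assms by (intro powr_mono2) auto
  then show ?thesis
    using assms by (simp add: powr_powr powr_mult)
qed

text \<open>Here \<open>x\<close> plays the role of \<open>N\<close>, \<open>M = x\<^sup>1\<^sup>+\<^sup>s\<close> and \<open>\<delta> = 1/(2x)\<close>; the left side decays like
  \<open>x\<^sup>-\<^sup>s\<close> and the right side like \<open>x\<^sup>-\<^sup>(\<^sup>1\<^sup>+\<^sup>s\<^sup>)\<^sup>/\<^sup>2\<close>.\<close>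

lemma reverse_Carleson_peak_fun_bound:
  fixes \<mu> :: "complex measure"
  assumes fm: "finite_measure \<mu>" and sets: "sets \<mu> = sets (restrict_space borel (cball 0 1))"
    and C: "C > 0" and p: "p > 0" and q: "q > 0"
    and reverse_Carleson: "\<And>f. f holomorphic_on ball 0 1 \<Longrightarrow> continuous_on (cball 0 1) f \<Longrightarrow>
                             Hp_norm p f \<le> C * Lq_norm q \<mu> f"
    and N: "N > 0" and M: "M > 0" "p * M \<ge> 1"
  shows "exp (-1) / (2 * pi * sqrt (p * M))
           \<le> C powr p * ((measure \<mu> (space \<mu>) + 1)
                 * (1 / real N + exp (- (q * M * (1 / (2 * real N))\<^sup>2 / 2)))) powr (p/q)"
proof -
  define m where "m = measure \<mu> (space \<mu>)"
  define u where "u = 1 / real N"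
  define \<delta> where "\<delta> = 1 / (2 * real N)"
  define E where "E = exp (- (q * M * \<delta>\<^sup>2 / 2))"
  obtain \<theta> where \<theta>: "0 \<le> \<theta>" "\<theta> \<le> pi/2" and
    cap: "measure \<mu> (cball 0 1 \<inter> ball (cis \<theta>) \<delta>) \<le> m / real N"
    using exists_cap_of_small_measure[OF fm sets N] unfolding \<delta>_def m_def by blast
  let ?g = "peak_fun M (cis \<theta>)"
  have "m / real N = m * u" "0 \<le> u + E"
    by (simp_all add: u_def E_def)
  moreover have "(m + 1) * (u + E) = m * u + m * E + (u + E)"
    by (simp add: algebra_simps)
  ultimately have cap_le: "measure \<mu> (cball 0 1 \<inter> ball (cis \<theta>) \<delta>) + m * E \<le> (m + 1) * (u + E)"
    using cap by linarith
  have "Lq_norm q \<mu> ?g \<le> (measure \<mu> (cball 0 1 \<inter> ball (cis \<theta>) \<delta>) + m * E) powr (1/q)"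
    unfolding m_def E_def using M q by (intro Lq_norm_peak_fun_le[OF fm sets]) (auto simp: \<delta>_def)
  also have "\<dots> \<le> ((m + 1) * (u + E)) powr (1/q)"
    using cap_le q by (intro powr_mono2) (auto simp: m_def E_def)
  finally have Lq: "Lq_norm q \<mu> ?g \<le> ((m + 1) * (u + E)) powr (1/q)" .
  have "(exp (-1) / (2 * pi * sqrt (p * M))) powr (1/p) \<le> Hp_norm p ?g"
    by (rule Hp_norm_peak_fun_ge[OF p M \<theta>])
  also have "\<dots> \<le> C * Lq_norm q \<mu> ?g"
    by (intro reverse_Carleson holomorphic_peak_fun continuous_on_peak_fun)
  also have "\<dots> \<le> C * ((m + 1) * (u + E)) powr (1/q)"
    using Lq C by (intro mult_left_mono) auto
  finally show ?thesis
    unfolding m_def u_def E_def \<delta>_def using C p q M fm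
    by (intro le_powr_of_root_le) auto
qed

lemma eventually_peak_fun_contradiction:
  fixes K q s p :: real
  assumes "K > 0" "q > 0" "s > 1" "p > 0"
  shows "eventually (\<lambda>x. K * (1/x + exp (- (q * x powr (1+s) * (1 / (2*x))\<^sup>2 / 2))) powr s
                          < exp (-1) / (2 * pi * sqrt (p * x powr (1+s)))
                        \<and> 1 \<le> p * x powr (1+s)) at_top"
proof -
  have "eventually (\<lambda>x. K * (1/x + exp (- (q * x powr (1+s) * (1 / (2*x))\<^sup>2 / 2))) powr s
                         < exp (-1) / (2 * pi * sqrt (p * x powr (1+s)))) at_top"
    using assms by real_asymp
  moreover have "eventually (\<lambda>x. 1 \<le> p * x powr (1+s)) at_top"
    using assms by real_asymp
  ultimately show ?thesis
    by eventually_elim auto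
qed

theorem theorem3p4:
  fixes p q :: real
  assumes "0 < q" and "q < p"
  shows "\<not> (\<exists>(\<mu>::complex measure) (C::real).
            finite_measure \<mu> \<and> sets \<mu> = sets (restrict_space borel (cball 0 1)) \<and> C > 0 \<and>
            (\<forall>f. f holomorphic_on ball 0 1 \<and> continuous_on (cball 0 1) f \<longrightarrow>
                 Hp_norm p f \<le> C * Lq_norm q \<mu> f))"
proof
  assume "\<exists>(\<mu>::complex measure) (C::real).
            finite_measure \<mu> \<and> sets \<mu> = sets (restrict_space borel (cball 0 1)) \<and> C > 0 \<and>
            (\<forall>f. f holomorphic_on ball 0 1 \<and> continuous_on (cball 0 1) f \<longrightarrow>
                 Hp_norm p f \<le> C * Lq_norm q \<mu> f)"
  then obtain \<mu> :: "complex measure" and C :: real where fm: "finite_measure \<mu>"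
    and sets: "sets \<mu> = sets (restrict_space borel (cball 0 1))" and C: "C > 0"
    and reverse_Carleson: "\<And>f. f holomorphic_on ball 0 1 \<Longrightarrow> continuous_on (cball 0 1) f \<Longrightarrow>
                 Hp_norm p f \<le> C * Lq_norm q \<mu> f" by blast
  define m where "m = measure \<mu> (space \<mu>) + 1"
  define s where "s = p / q"
  have m: "m > 0" and s: "s > 1" and p: "p > 0"
    using assms by (simp_all add: m_def s_def add_nonneg_pos)
  define E where "E x = exp (- (q * x powr (1+s) * (1 / (2 * x))\<^sup>2 / 2))" for x :: real
  have "\<forall>\<^sub>F n in sequentially. 0 < n \<and>
          C powr p * m powr s * (1 / real n + E (real n)) powr s
            < exp (-1) / (2 * pi * sqrt (p * real n powr (1+s))) \<and> 1 \<le> p * real n powr (1+s)"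
    using C m s p assms(1) unfolding E_def
    by (intro eventually_conj eventually_gt_at_top
        eventually_compose_filterlim[OF _ filterlim_real_sequentially]
        eventually_peak_fun_contradiction) auto
  then obtain N :: nat where "N > 0" and
    N: "C powr p * m powr s * (1 / real N + E (real N)) powr s
          < exp (-1) / (2 * pi * sqrt (p * real N powr (1+s)))" "1 \<le> p * real N powr (1+s)"
    using eventually_happens'[OF sequentially_bot] by blast
  have "exp (-1) / (2 * pi * sqrt (p * real N powr (1+s)))
          \<le> C powr p * (m * (1 / real N + E (real N))) powr s"
    using fm sets C p assms(1) reverse_Carleson \<open>N > 0\<close> N(2) unfolding m_def E_def s_def
    by (intro reverse_Carleson_peak_fun_bound) auto
  also have "\<dots> = C powr p * m powr s * (1 / real N + E (real N)) powr s"
    using m by (simp add: powr_mult E_def)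
  finally show False
    using N(1) by simp
qed

end
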